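(* Let $k$ be a field, $V$ a $k$-vector space and $\varphi,\psi\in\mathrm{End}_k(V)$ finite potent endomorphisms such that $\varphi\psi-\psi\varphi$ has finite rank. Then $\langle\varphi,\psi\rangle:=\varphi\,k[\varphi,\psi]+\psi\,k[\varphi,\psi]$ is a finite potent subspace of $\mathrm{End}_k(V)$.
   Context: An endomorphism $\varphi$ of $V$ is finite potent if $\varphi^nV$ is finite dimensional for some $n$. $k[\varphi,\psi]$ denotes the $k$-subalgebra of $\mathrm{End}_k(V)$ generated by $\varphi$ and $\psi$. A subspace $F\subseteq\mathrm{End}_k(V)$ is finite potent if there is $n$ such that for any $\varphi_1,\dots,\varphi_n\in F$ the space $\varphi_1\cdots\varphi_nV$ is finite dimensional. *)

theory Defs
  imports Complex_Main
begin

definition fin_dim :: "('k::field \<Rightarrow> 'v::ab_group_add \<Rightarrow> 'v) \<Rightarrow> 'v set \<Rightarrow> bool" where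
  "fin_dim s S \<longleftrightarrow> (\<exists>B. finite B \<and> S \<subseteq> module.span s B)"

definition finite_rank :: "('k::field \<Rightarrow> 'v::ab_group_add \<Rightarrow> 'v) \<Rightarrow> ('v \<Rightarrow> 'v) \<Rightarrow> bool" where
  "finite_rank s f \<longleftrightarrow> fin_dim s (range f)"

definition finite_potent :: "('k::field \<Rightarrow> 'v::ab_group_add \<Rightarrow> 'v) \<Rightarrow> ('v \<Rightarrow> 'v) \<Rightarrow> bool" where
  "finite_potent s f \<longleftrightarrow> (\<exists>n. fin_dim s (range (f ^^ n)))"

inductive_set kalg :: "('k::field \<Rightarrow> 'v::ab_group_add \<Rightarrow> 'v) \<Rightarrow> ('v \<Rightarrow> 'v) \<Rightarrow> ('v \<Rightarrow> 'v) \<Rightarrow> ('v \<Rightarrow> 'v) set"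
  for s :: "'k::field \<Rightarrow> 'v::ab_group_add \<Rightarrow> 'v" and \<phi> \<psi> :: "'v \<Rightarrow> 'v" where
  kalg_id: "id \<in> kalg s \<phi> \<psi>"
| kalg_phi: "\<phi> \<in> kalg s \<phi> \<psi>"
| kalg_psi: "\<psi> \<in> kalg s \<phi> \<psi>"
| kalg_add: "f \<in> kalg s \<phi> \<psi> \<Longrightarrow> g \<in> kalg s \<phi> \<psi> \<Longrightarrow> (\<lambda>x. f x + g x) \<in> kalg s \<phi> \<psi>"
| kalg_scale: "f \<in> kalg s \<phi> \<psi> \<Longrightarrow> (\<lambda>x. s c (f x)) \<in> kalg s \<phi> \<psi>"
| kalg_comp: "f \<in> kalg s \<phi> \<psi> \<Longrightarrow> g \<in> kalg s \<phi> \<psi> \<Longrightarrow> f \<circ> g \<in> kalg s \<phi> \<psi>"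

definition gen_space :: "('k::field \<Rightarrow> 'v::ab_group_add \<Rightarrow> 'v) \<Rightarrow> ('v \<Rightarrow> 'v) \<Rightarrow> ('v \<Rightarrow> 'v) \<Rightarrow> ('v \<Rightarrow> 'v) set" where
  "gen_space s \<phi> \<psi> = {(\<lambda>x. \<phi> (a x) + \<psi> (b x)) | a b. a \<in> kalg s \<phi> \<psi> \<and> b \<in> kalg s \<phi> \<psi>}"

definition finite_potent_subspace :: "('k::field \<Rightarrow> 'v::ab_group_add \<Rightarrow> 'v) \<Rightarrow> ('v \<Rightarrow> 'v) set \<Rightarrow> bool" where
  "finite_potent_subspace s F \<longleftrightarrow>
     (\<forall>f\<in>F. Vector_Spaces.linear s s f) \<and> (\<lambda>x. 0) \<in> F \<and>
     (\<forall>f\<in>F. \<forall>g\<in>F. (\<lambda>x. f x + g x) \<in> F) \<and> (\<forall>c. \<forall>f\<in>F. (\<lambda>x. s c (f x)) \<in> F) \<and>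
     (\<exists>n. \<forall>fs. length fs = n \<and> set fs \<subseteq> F \<longrightarrow> fin_dim s (range (foldr (\<circ>) fs id)))"

end

theory Submission
  imports Defs
begin

text \<open>Finite-rank operators form a two-sided ideal, so the commutator hypothesis makes
  \<open>k[\<phi>,\<psi>]\<close> commutative modulo finite rank. Hence a product of \<open>n\<close> elements of
  \<open>\<phi> k[\<phi>,\<psi>] + \<psi> k[\<phi>,\<psi>]\<close> is congruent modulo finite rank to a sum of terms
  \<open>\<phi>\<^sup>i \<psi>\<^sup>j h\<close> with \<open>i + j \<ge> n\<close> and \<open>h \<in> k[\<phi>,\<psi>]\<close>. If \<open>\<phi>^n\<^sub>1\<close> and \<open>\<psi>^n\<^sub>2\<close>
  have finite rank and \<open>n = n\<^sub>1 + n\<^sub>2\<close>, every such term has \<open>i \<ge> n\<^sub>1\<close> or \<open>j \<ge> n\<^sub>2\<close>,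
  so it has finite rank.\<close>

definition almost_commute ::
    "('k::field \<Rightarrow> 'v::ab_group_add \<Rightarrow> 'v) \<Rightarrow> ('v \<Rightarrow> 'v) \<Rightarrow> ('v \<Rightarrow> 'v) \<Rightarrow> bool" where
  "almost_commute s a b \<longleftrightarrow> finite_rank s (\<lambda>x. a (b x) - b (a x))"

context vector_space
begin

lemma linear_endo_iff:
  "Vector_Spaces.linear scale scale f \<longleftrightarrow>
     (\<forall>x y. f (x + y) = f x + f y) \<and> (\<forall>c x. f (scale c x) = scale c (f x))"
  unfolding linear_iff_module_hom module_hom_iff using module_axioms by auto

lemma linear_endo_eqs:
  assumes "Vector_Spaces.linear scale scale f"
  shows "f (x + y) = f x + f y" "f (scale c x) = scale c (f x)" "f (x - y) = f x - f y"
    "f 0 = 0" "f (- x) = - f x"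
proof -
  interpret Vector_Spaces.linear scale scale f using assms .
  show "f (x + y) = f x + f y" "f (scale c x) = scale c (f x)" "f (x - y) = f x - f y"
    "f 0 = 0" "f (- x) = - f x"
    by (auto simp: add scale diff neg)
qed

lemma fin_dim_subset: "S \<subseteq> T \<Longrightarrow> fin_dim scale T \<Longrightarrow> fin_dim scale S"
  unfolding fin_dim_def by blast

lemma finite_rank_zero: "finite_rank scale (\<lambda>x. 0)"
  unfolding finite_rank_def fin_dim_def by (auto intro!: exI[of _ "{}"] span_zero)

lemma finite_rank_add:
  assumes "finite_rank scale f" "finite_rank scale g"
  shows "finite_rank scale (\<lambda>x. f x + g x)"
proof -
  obtain A B where "finite A" "range f \<subseteq> span A" "finite B" "range g \<subseteq> span B"
    using assms unfolding finite_rank_def fin_dim_def by blast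
  then have "range f \<subseteq> span (A \<union> B)" "range g \<subseteq> span (A \<union> B)"
    using span_mono[of A "A \<union> B"] span_mono[of B "A \<union> B"] by auto
  then have "range (\<lambda>x. f x + g x) \<subseteq> span (A \<union> B)"
    by (auto intro!: span_add)
  with \<open>finite A\<close> \<open>finite B\<close> show ?thesis
    unfolding finite_rank_def fin_dim_def by blast
qed

lemma finite_rank_scale: "finite_rank scale f \<Longrightarrow> finite_rank scale (\<lambda>x. scale c (f x))"
  unfolding finite_rank_def fin_dim_def by (auto intro!: span_scale)

lemma finite_rank_neg: "finite_rank scale f \<Longrightarrow> finite_rank scale (\<lambda>x. - f x)"
  unfolding finite_rank_def fin_dim_def by (auto intro!: span_neg)

lemma finite_rank_comp_right: "finite_rank scale f \<Longrightarrow> finite_rank scale (\<lambda>x. f (h x))"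
  unfolding finite_rank_def fin_dim_def by blast

lemma finite_rank_comp_left:
  assumes "Vector_Spaces.linear scale scale g" "finite_rank scale f"
  shows "finite_rank scale (\<lambda>x. g (f x))"
proof -
  interpret Vector_Spaces.linear scale scale g using assms(1) .
  obtain B where "finite B" "range f \<subseteq> span B"
    using assms(2) unfolding finite_rank_def fin_dim_def by blast
  then have "range (\<lambda>x. g (f x)) \<subseteq> span (g ` B)"
    using span_image by auto
  with \<open>finite B\<close> show ?thesis
    unfolding finite_rank_def fin_dim_def by blast
qed

lemma almost_commute_sym: "almost_commute scale a b \<Longrightarrow> almost_commute scale b a"
  unfolding almost_commute_def by (drule finite_rank_neg) simp

lemma almost_commute_refl: "almost_commute scale a a"
  unfolding almost_commute_def using finite_rank_zero by simp

lemma almost_commute_id: "almost_commute scale a id"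
  unfolding almost_commute_def using finite_rank_zero by simp

lemma almost_commute_add:
  assumes "Vector_Spaces.linear scale scale a" "almost_commute scale a f" "almost_commute scale a g"
  shows "almost_commute scale a (\<lambda>x. f x + g x)"
  using finite_rank_add[OF assms(2,3)[unfolded almost_commute_def]]
  unfolding almost_commute_def by (simp add: linear_endo_eqs[OF assms(1)] algebra_simps)

lemma almost_commute_scale:
  assumes "Vector_Spaces.linear scale scale a" "almost_commute scale a f"
  shows "almost_commute scale a (\<lambda>x. scale c (f x))"
  using finite_rank_scale[OF assms(2)[unfolded almost_commute_def], of c]
  unfolding almost_commute_def by (simp add: linear_endo_eqs[OF assms(1)] scale_right_diff_distrib)

lemma almost_commute_comp:
  assumes "Vector_Spaces.linear scale scale f" "almost_commute scale a f" "almost_commute scale a g"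
  shows "almost_commute scale a (f \<circ> g)"
proof -
  have "finite_rank scale (\<lambda>x. (a (f (g x)) - f (a (g x))) + f (a (g x) - g (a x)))"
    using assms(2,3) unfolding almost_commute_def
    by (intro finite_rank_add finite_rank_comp_right[where h = g] finite_rank_comp_left[OF assms(1)])
  then show ?thesis
    unfolding almost_commute_def by (simp add: linear_endo_eqs[OF assms(1)])
qed

end

locale linear_endo_pair = vector_space s for s :: "'k::field \<Rightarrow> 'v::ab_group_add \<Rightarrow> 'v" +
  fixes \<phi> \<psi> :: "'v \<Rightarrow> 'v"
  assumes linear_phi: "Vector_Spaces.linear s s \<phi>"
    and linear_psi: "Vector_Spaces.linear s s \<psi>"
begin

lemma kalg_linear: "f \<in> kalg s \<phi> \<psi> \<Longrightarrow> Vector_Spaces.linear s s f"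
proof (induction rule: kalg.induct)
  case kalg_phi
  show ?case by (rule linear_phi)
next
  case kalg_psi
  show ?case by (rule linear_psi)
qed (simp_all add: linear_endo_iff scale_right_distrib)

lemma funpow_in_kalg: "\<phi> ^^ i \<in> kalg s \<phi> \<psi>" "\<psi> ^^ i \<in> kalg s \<phi> \<psi>"
  by (induction i) (auto intro: kalg.intros)

lemma almost_commute_kalg:
  assumes "Vector_Spaces.linear s s a" "almost_commute s a \<phi>" "almost_commute s a \<psi>"
    and "b \<in> kalg s \<phi> \<psi>"
  shows "almost_commute s a b"
  using assms(4)
proof (induction rule: kalg.induct)
  case (kalg_comp f g)
  then show ?case by (intro almost_commute_comp kalg_linear)
qed (use assms almost_commute_id almost_commute_add almost_commute_scale in blast)+

lemma gen_spaceI: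
  "a \<in> kalg s \<phi> \<psi> \<Longrightarrow> b \<in> kalg s \<phi> \<psi> \<Longrightarrow> (\<lambda>x. \<phi> (a x) + \<psi> (b x)) \<in> gen_space s \<phi> \<psi>"
  unfolding gen_space_def by blast

lemma gen_spaceE:
  assumes "f \<in> gen_space s \<phi> \<psi>"
  obtains a b where "f = (\<lambda>x. \<phi> (a x) + \<psi> (b x))" "a \<in> kalg s \<phi> \<psi>" "b \<in> kalg s \<phi> \<psi>"
  using assms unfolding gen_space_def by blast

lemma gen_space_linear: "f \<in> gen_space s \<phi> \<psi> \<Longrightarrow> Vector_Spaces.linear s s f"
  by (elim gen_spaceE) (simp add: linear_endo_iff linear_endo_eqs[OF linear_phi]
      linear_endo_eqs[OF linear_psi] linear_endo_eqs[OF kalg_linear] scale_right_distrib)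

lemma gen_space_zero: "(\<lambda>x. 0) \<in> gen_space s \<phi> \<psi>"
proof -
  have "(\<lambda>x. s 0 (id x)) \<in> kalg s \<phi> \<psi>"
    by (intro kalg_scale kalg_id)
  from gen_spaceI[OF this this] show ?thesis
    by (simp add: linear_endo_eqs[OF linear_phi] linear_endo_eqs[OF linear_psi])
qed

lemma gen_space_add:
  assumes "f \<in> gen_space s \<phi> \<psi>" "g \<in> gen_space s \<phi> \<psi>"
  shows "(\<lambda>x. f x + g x) \<in> gen_space s \<phi> \<psi>"
proof -
  obtain a b where ab: "a \<in> kalg s \<phi> \<psi>" "b \<in> kalg s \<phi> \<psi>"
    and f: "f = (\<lambda>x. \<phi> (a x) + \<psi> (b x))"
    using assms(1) by (rule gen_spaceE)
  obtain a' b' where ab': "a' \<in> kalg s \<phi> \<psi>" "b' \<in> kalg s \<phi> \<psi>"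
    and g: "g = (\<lambda>x. \<phi> (a' x) + \<psi> (b' x))"
    using assms(2) by (rule gen_spaceE)
  from f g have "(\<lambda>x. f x + g x) = (\<lambda>x. \<phi> (a x + a' x) + \<psi> (b x + b' x))"
    by (simp add: linear_endo_eqs[OF linear_phi] linear_endo_eqs[OF linear_psi] add_ac)
  then show ?thesis
    using ab ab' by (simp add: gen_spaceI kalg_add)
qed

lemma gen_space_scale:
  assumes "f \<in> gen_space s \<phi> \<psi>"
  shows "(\<lambda>x. s c (f x)) \<in> gen_space s \<phi> \<psi>"
proof -
  obtain a b where ab: "a \<in> kalg s \<phi> \<psi>" "b \<in> kalg s \<phi> \<psi>"
    and "f = (\<lambda>x. \<phi> (a x) + \<psi> (b x))"
    using assms by (rule gen_spaceE)
  then have "(\<lambda>x. s c (f x)) = (\<lambda>x. \<phi> (s c (a x)) + \<psi> (s c (b x)))"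
    by (simp add: linear_endo_eqs[OF linear_phi] linear_endo_eqs[OF linear_psi] scale_right_distrib)
  then show ?thesis
    using ab by (simp add: gen_spaceI kalg_scale)
qed

end

locale almost_commuting_pair = linear_endo_pair s \<phi> \<psi>
  for s :: "'k::field \<Rightarrow> 'v::ab_group_add \<Rightarrow> 'v" and \<phi> \<psi> +
  assumes finite_rank_commutator: "finite_rank s (\<lambda>x. \<phi> (\<psi> x) - \<psi> (\<phi> x))"
begin

lemma kalg_almost_commute:
  assumes "a \<in> kalg s \<phi> \<psi>" "b \<in> kalg s \<phi> \<psi>"
  shows "almost_commute s a b"
proof -
  have phi_psi: "almost_commute s \<phi> \<psi>"
    using finite_rank_commutator unfolding almost_commute_def .
  have phi_a: "almost_commute s \<phi> a"
    using linear_phi almost_commute_refl phi_psi assms(1) by (rule almost_commute_kalg)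
  have psi_a: "almost_commute s \<psi> a"
    using linear_psi almost_commute_sym[OF phi_psi] almost_commute_refl assms(1)
    by (rule almost_commute_kalg)
  show ?thesis
    using kalg_linear[OF assms(1)] almost_commute_sym[OF phi_a] almost_commute_sym[OF psi_a] assms(2)
    by (rule almost_commute_kalg)
qed

inductive_set high_degree :: "nat \<Rightarrow> ('v \<Rightarrow> 'v) set" for N where
  monomial: "i + j \<ge> N \<Longrightarrow> h \<in> kalg s \<phi> \<psi> \<Longrightarrow> (\<lambda>x. (\<phi>^^i) ((\<psi>^^j) (h x))) \<in> high_degree N"
| add: "f \<in> high_degree N \<Longrightarrow> g \<in> high_degree N \<Longrightarrow> (\<lambda>x. f x + g x) \<in> high_degree N"
| finite_rank_perturb: "g \<in> high_degree N \<Longrightarrow> finite_rank s (\<lambda>x. f x - g x) \<Longrightarrow> f \<in> high_degree N"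

lemma gen_space_comp_high_degree:
  assumes g: "g \<in> gen_space s \<phi> \<psi>" and f: "f \<in> high_degree N"
  shows "g \<circ> f \<in> high_degree (Suc N)"
proof -
  have linear_g: "Vector_Spaces.linear s s g"
    using g by (rule gen_space_linear)
  obtain a b where g_eq: "g = (\<lambda>x. \<phi> (a x) + \<psi> (b x))"
    and a: "a \<in> kalg s \<phi> \<psi>" and b: "b \<in> kalg s \<phi> \<psi>"
    using g by (rule gen_spaceE)
  from f show ?thesis
  proof (induction rule: high_degree.induct)
    case (monomial i j h)
    define P where "P = (\<lambda>x. (\<phi>^^i) ((\<psi>^^j) x))"
    have P: "P \<in> kalg s \<phi> \<psi>"
      unfolding P_def using kalg_comp[OF funpow_in_kalg(1)[of i] funpow_in_kalg(2)[of j]]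
      by (simp add: o_def)
    have shifted: "(\<lambda>x. (\<phi>^^Suc i) ((\<psi>^^j) ((a \<circ> h) x)) + (\<phi>^^i) ((\<psi>^^Suc j) ((b \<circ> h) x)))
        \<in> high_degree (Suc N)"
      using monomial by (intro high_degree.add high_degree.monomial kalg_comp a b) auto
    have a_past_P: "finite_rank s (\<lambda>x. \<phi> (a (P x) - P (a x)))"
      using kalg_almost_commute[OF a P] unfolding almost_commute_def
      by (rule finite_rank_comp_left[OF linear_phi])
    have b_past_P: "finite_rank s (\<lambda>x. \<psi> (b (P x) - P (b x)))"
      using kalg_almost_commute[OF b P] unfolding almost_commute_def
      by (rule finite_rank_comp_left[OF linear_psi])
    have psi_past_phi: "finite_rank s (\<lambda>x. \<psi> ((\<phi>^^i) x) - (\<phi>^^i) (\<psi> x))"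
      using kalg_almost_commute[OF kalg_psi funpow_in_kalg(1)] unfolding almost_commute_def .
    have "finite_rank s (\<lambda>x. g (P (h x)) -
        ((\<phi>^^Suc i) ((\<psi>^^j) ((a \<circ> h) x)) + (\<phi>^^i) ((\<psi>^^Suc j) ((b \<circ> h) x))))"
      using finite_rank_add[OF finite_rank_add[OF
            a_past_P[THEN finite_rank_comp_right, where h = h]
            b_past_P[THEN finite_rank_comp_right, where h = h]]
          psi_past_phi[THEN finite_rank_comp_right, where h = "\<lambda>x. (\<psi>^^j) (b (h x))"]]
      unfolding g_eq P_def
      by (simp add: linear_endo_eqs[OF linear_phi] linear_endo_eqs[OF linear_psi])
        (simp add: algebra_simps)
    from high_degree.finite_rank_perturb[OF shifted this] show ?case
      unfolding P_def by (simp add: o_def)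
  next
    case (add f1 f2)
    then show ?case
      using high_degree.add[OF add.IH] by (simp add: o_def linear_endo_eqs[OF linear_g])
  next
    case (finite_rank_perturb f' f)
    have "finite_rank s (\<lambda>x. (g \<circ> f) x - (g \<circ> f') x)"
      using finite_rank_comp_left[OF linear_g finite_rank_perturb.hyps(2)]
      by (simp add: linear_endo_eqs[OF linear_g])
    with finite_rank_perturb.IH show ?case
      by (rule high_degree.finite_rank_perturb)
  qed
qed

lemma product_in_high_degree:
  "set fs \<subseteq> gen_space s \<phi> \<psi> \<Longrightarrow> foldr (\<circ>) fs id \<in> high_degree (length fs)"
proof (induction fs)
  case Nil
  have "(\<lambda>x. (\<phi>^^0) ((\<psi>^^0) (id x))) \<in> high_degree 0"
    by (intro high_degree.monomial kalg_id) auto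
  then show ?case by (simp add: id_def)
next
  case (Cons g fs)
  then have "g \<circ> foldr (\<circ>) fs id \<in> high_degree (Suc (length fs))"
    by (intro gen_space_comp_high_degree Cons.IH) auto
  moreover have "foldr (\<circ>) (g # fs) id = g \<circ> foldr (\<circ>) fs id"
    by simp
  ultimately show ?case
    by (simp only: length_Cons)
qed

lemma high_degree_finite_rank:
  assumes phi: "fin_dim s (range (\<phi>^^n\<^sub>1))" and psi: "fin_dim s (range (\<psi>^^n\<^sub>2))"
    and "f \<in> high_degree (n\<^sub>1 + n\<^sub>2)"
  shows "finite_rank s f"
  using assms(3)
proof (induction rule: high_degree.induct)
  case (monomial i j h)
  show ?case
  proof (cases "n\<^sub>1 \<le> i")
    case True
    then have "\<phi>^^i = (\<phi>^^n\<^sub>1) \<circ> (\<phi>^^(i - n\<^sub>1))"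
      by (metis funpow_add le_add_diff_inverse)
    then have "range (\<lambda>x. (\<phi>^^i) ((\<psi>^^j) (h x))) \<subseteq> range (\<phi>^^n\<^sub>1)"
      by auto
    then show ?thesis
      using phi unfolding finite_rank_def by (rule fin_dim_subset)
  next
    case False
    with monomial have "n\<^sub>2 \<le> j"
      by linarith
    then have "\<psi>^^j = (\<psi>^^n\<^sub>2) \<circ> (\<psi>^^(j - n\<^sub>2))"
      by (metis funpow_add le_add_diff_inverse)
    then have "range (\<lambda>x. (\<psi>^^j) (h x)) \<subseteq> range (\<psi>^^n\<^sub>2)"
      by auto
    then have "finite_rank s (\<lambda>x. (\<psi>^^j) (h x))"
      using psi unfolding finite_rank_def by (rule fin_dim_subset)
    then show ?thesis
      by (rule finite_rank_comp_left[OF kalg_linear[OF funpow_in_kalg(1)]])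
  qed
next
  case (add f g)
  from add.IH show ?case by (rule finite_rank_add)
next
  case (finite_rank_perturb g f)
  from finite_rank_add[OF this(3,2)] show ?case by simp
qed

end

theorem lemma3p4:
  fixes s :: "'k::field \<Rightarrow> 'v::ab_group_add \<Rightarrow> 'v" and \<phi> \<psi> :: "'v \<Rightarrow> 'v"
  assumes "vector_space s"
    and "Vector_Spaces.linear s s \<phi>" and "Vector_Spaces.linear s s \<psi>"
    and "finite_potent s \<phi>" and "finite_potent s \<psi>"
    and "finite_rank s (\<lambda>x. \<phi> (\<psi> x) - \<psi> (\<phi> x))"
  shows "finite_potent_subspace s (gen_space s \<phi> \<psi>)"
proof -
  interpret almost_commuting_pair s \<phi> \<psi>
    using assms unfolding almost_commuting_pair_def almost_commuting_pair_axioms_def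
      linear_endo_pair_def linear_endo_pair_axioms_def by blast
  obtain n\<^sub>1 n\<^sub>2 where phi: "fin_dim s (range (\<phi>^^n\<^sub>1))" and psi: "fin_dim s (range (\<psi>^^n\<^sub>2))"
    using assms(4,5) unfolding finite_potent_def by blast
  have "fin_dim s (range (foldr (\<circ>) fs id))"
    if "length fs = n\<^sub>1 + n\<^sub>2" "set fs \<subseteq> gen_space s \<phi> \<psi>" for fs
  proof -
    have "foldr (\<circ>) fs id \<in> high_degree (n\<^sub>1 + n\<^sub>2)"
      using product_in_high_degree[OF that(2)] unfolding that(1) .
    then show ?thesis
      using high_degree_finite_rank[OF phi psi] unfolding finite_rank_def by blast
  qed
  then show ?thesis
    unfolding finite_potent_subspace_def
    by (intro conjI ballI allI impI exI[of _ "n\<^sub>1 + n\<^sub>2"] gen_space_linear gen_space_zero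
        gen_space_add gen_space_scale) auto
qed

end
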